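(* Let $\mathbf S,\mathbf M\in\mathbb R^{d\times d}$ be symmetric positive definite, $\mathbf T$ symmetric positive semi-definite, $\sigma>0$, $n\ge1$, and $\mathbf S'=\mathbf M^{-1/2}\mathbf S\mathbf M^{-1/2}$, $\mathbf T'=\mathbf M^{-1/2}\mathbf T\mathbf M^{-1/2}$. Then $$\sup_{\substack{\mathbf F\succ\mathbf 0\\ \operatorname{tr}\mathbf F\le 1/\pi^2}}\Big\langle\mathbf T',\Big(\mathbf F^{-1}+\frac{n\mathbf S'}{\sigma^2}\Big)^{-1}\Big\rangle=\inf_{\mathbf A\in\mathbb R^{d\times d}}\ \frac1{\pi^2}\big\|(\mathbf I-\mathbf A)^\top\mathbf T'(\mathbf I-\mathbf A)\big\|+\frac{\sigma^2}{n}\big\langle\mathbf T',\mathbf A(\mathbf S')^{-1}\mathbf A^\top\big\rangle .$$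
   Context: $\|\cdot\|$ denotes the spectral norm, $\langle\mathbf A,\mathbf B\rangle=\operatorname{tr}(\mathbf A^\top\mathbf B)$, and the supremum ranges over symmetric positive definite matrices $\mathbf F$ with trace (equivalently nuclear norm) at most $1/\pi^2$. *)

theory Defs
  imports "HOL-Analysis.Analysis"
begin

definition sym_mat :: "real^'n^'n \<Rightarrow> bool" where
  "sym_mat A \<longleftrightarrow> transpose A = A"

definition pos_def :: "real^'n^'n \<Rightarrow> bool" where
  "pos_def A \<longleftrightarrow> sym_mat A \<and> (\<forall>x. x \<noteq> 0 \<longrightarrow> x \<bullet> (A *v x) > 0)"

definition pos_semidef :: "real^'n^'n \<Rightarrow> bool" where
  "pos_semidef A \<longleftrightarrow> sym_mat A \<and> (\<forall>x. x \<bullet> (A *v x) \<ge> 0)"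

definition inv_sqrt :: "real^'n^'n \<Rightarrow> real^'n^'n" where
  "inv_sqrt M = (THE R. pos_def R \<and> R ** R = matrix_inv M)"

definition spec_norm :: "real^'n^'n \<Rightarrow> real" where
  "spec_norm A = onorm (\<lambda>x. A *v x)"

definition frob_inner :: "real^'n^'n \<Rightarrow> real^'n^'n \<Rightarrow> real" where
  "frob_inner A B = trace (transpose A ** B)"

end

theory Submission
  imports Defs
begin

text \<open>
  Write \<open>T, S\<close> for \<open>T', S'\<close>, \<open>c = 1/\<pi>\<^sup>2\<close> and \<open>V = (\<sigma>\<^sup>2/n) S\<^sup>-\<^sup>1\<close>. The function
  \<open>risk F A = \<langle>(I-A)\<^sup>T T (I-A), F\<rangle> + \<langle>T, A V A\<^sup>T\<rangle>\<close> is affine in \<open>F\<close>, and completing the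
  square in \<open>A\<close> gives \<open>risk F A = min_risk F + \<langle>T, (A-G)(F+V)(A-G)\<^sup>T\<rangle>\<close> with
  \<open>G = F(F+V)\<^sup>-\<^sup>1\<close> and \<open>min_risk F = \<langle>T, F - F(F+V)\<^sup>-\<^sup>1F\<rangle> = \<langle>T, (F\<^sup>-\<^sup>1 + V\<^sup>-\<^sup>1)\<^sup>-\<^sup>1\<rangle>\<close>.
  Maximising \<open>risk F A\<close> over \<open>tr F \<le> c\<close> gives \<open>c \<parallel>(I-A)\<^sup>T T (I-A)\<parallel> + \<langle>T, A V A\<^sup>T\<rangle>\<close>,
  attained at a rank-one \<open>F\<close>. So the theorem is the minimax equality
  \<open>sup\<^sub>F min\<^sub>A risk = inf\<^sub>A sup\<^sub>F risk\<close>, and weak duality gives one inequality.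
  For the other, \<open>min_risk\<close> is concave and upper semicontinuous, so it has a maximiser
  \<open>F\<^sub>*\<close> on the compact convex set of positive semidefinite \<open>F\<close> with \<open>tr F \<le> c\<close>, where
  its value is approached by positive definite \<open>F\<close>. Moving from \<open>F\<^sub>*\<close> towards a feasible
  \<open>F\<close> changes \<open>min_risk\<close> by at least \<open>t (risk F A\<^sub>* - risk F\<^sub>* A\<^sub>*) - O(t\<^sup>2)\<close> with
  \<open>A\<^sub>* = F\<^sub>*(F\<^sub>*+V)\<^sup>-\<^sup>1\<close>, so maximality makes \<open>(F\<^sub>*, A\<^sub>*)\<close> a saddle point.
\<close>

lemma sq_le_mult_if_quadratic_nonneg:
  fixes a b c :: real
  assumes "a \<ge> 0" "c \<ge> 0" "\<And>t. a + 2*t*b + t*t*c \<ge> 0"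
  shows "b*b \<le> a*c"
proof (cases "c = 0")
  case True
  show ?thesis
  proof (rule ccontr)
    assume "\<not> ?thesis" hence "b \<noteq> 0" using True by auto
    have "a + 2*(-(a+1)/(2*b))*b + (-(a+1)/(2*b))*(-(a+1)/(2*b))*c \<ge> 0" by (rule assms(3))
    with True \<open>b\<noteq>0\<close> show False by (simp add: field_simps)
  qed
next
  case False
  hence c: "c > 0" using assms by auto
  have "a + 2*(-b/c)*b + (-b/c)*(-b/c)*c \<ge> 0" by (rule assms(3))
  hence "0 \<le> (a*c - b*b)/c" using c by (simp add: field_simps power2_eq_square)
  thus ?thesis using c by (simp add: zero_le_divide_iff)
qed

lemma double_le_add_if_sq_le_mult:
  fixes x y z :: real
  assumes "0 \<le> x" "0 \<le> y" "z * z \<le> x * y"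
  shows "2 * z \<le> x + y"
proof -
  have "(x + y)\<^sup>2 - (2 * z)\<^sup>2 = (x - y)\<^sup>2 + 4 * (x * y - z * z)"
    by (simp add: power2_eq_square algebra_simps)
  also have "\<dots> \<ge> 0" using assms(3) by simp
  finally have "(2 * z)\<^sup>2 \<le> (x + y)\<^sup>2" by simp
  moreover have "0 \<le> x + y" using assms(1,2) by simp
  ultimately show ?thesis by (rule power2_le_imp_le)
qed

lemma nonpos_if_le_quadratic:
  fixes d C :: real
  assumes C: "C \<ge> 0" and le: "\<And>t. 0 < t \<Longrightarrow> t \<le> 1 \<Longrightarrow> t * d \<le> t * t * C"
  shows "d \<le> 0"
proof (rule ccontr)
  assume "\<not> d \<le> 0"
  hence d: "d > 0" by simp
  define t where "t = min 1 (d / (2 * C + 1))"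
  have t: "0 < t" "t \<le> 1" using d C by (auto simp: t_def)
  have "t * d \<le> t * (t * C)" using le[OF t] by (simp add: mult.assoc)
  hence "d \<le> t * C" using t(1) by (rule mult_left_le_imp_le)
  also have "\<dots> \<le> d / (2 * C + 1) * C" using C by (intro mult_right_mono) (auto simp: t_def)
  also have "\<dots> < d"
  proof -
    have "d * C < d * (2 * C + 1)" using d C by simp
    thus ?thesis using C by (simp add: pos_divide_less_eq)
  qed
  finally show False by simp
qed

lemma Sup_le_at_limit_point:
  fixes f :: "'a::metric_space \<Rightarrow> real" and \<phi> :: "'a \<Rightarrow> 'b \<Rightarrow> real"
  assumes K: "compact K" "K \<noteq> {}" and bdd: "bdd_above (f ` K)"
    and cont: "\<And>a. continuous_on K (\<lambda>x. \<phi> x a)"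
    and le: "\<And>x a. x \<in> K \<Longrightarrow> f x \<le> \<phi> x a"
  shows "\<exists>l\<in>K. \<forall>a. Sup (f ` K) \<le> \<phi> l a"
proof -
  define s where "s = Sup (f ` K)"
  have "\<exists>x\<in>K. s - inverse (real (Suc k)) < f x" for k
  proof -
    have "s - inverse (real (Suc k)) < Sup (f ` K)" by (simp add: s_def)
    from less_cSupD[OF _ this] show ?thesis using K(2) by blast
  qed
  then obtain X where X: "\<And>k. X k \<in> K" "\<And>k. s - inverse (real (Suc k)) < f (X k)"
    by metis
  obtain l r where l: "l \<in> K" "strict_mono r" "(X \<circ> r) \<longlonglongrightarrow> l"
    using compact_imp_seq_compact[OF K(1)] X(1) unfolding seq_compact_def by metis
  have "s \<le> \<phi> l a" for a
  proof -
    have "((\<lambda>x. \<phi> x a) \<circ> (X \<circ> r)) \<longlonglongrightarrow> \<phi> l a"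
      using continuous_on_tendsto_compose[OF cont l(3) l(1)] X(1) by (simp add: o_def)
    hence "(\<lambda>k. \<phi> (X (r k)) a + inverse (real (Suc k))) \<longlonglongrightarrow> \<phi> l a + 0"
      by (intro tendsto_add LIMSEQ_inverse_real_of_nat) (simp add: o_def)
    moreover have "s \<le> \<phi> (X (r k)) a + inverse (real (Suc k))" for k
    proof -
      have "inverse (real (Suc (r k))) \<le> inverse (real (Suc k))"
        using seq_suble[OF l(2), of k] by (simp add: le_imp_inverse_le)
      thus ?thesis using X(2)[of "r k"] le[OF X(1), of "r k" a] by linarith
    qed
    ultimately show ?thesis by (intro LIMSEQ_le_const) auto
  qed
  thus ?thesis using l(1) unfolding s_def by blast
qed

text \<open>A pointwise infimum of continuous functions is upper semicontinuous.\<close>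

lemma inf_of_continuous_attains_sup:
  fixes f :: "'a::metric_space \<Rightarrow> real" and \<phi> :: "'a \<Rightarrow> 'b \<Rightarrow> real"
  assumes K: "compact K" "K \<noteq> {}"
    and cont: "\<And>a. continuous_on K (\<lambda>x. \<phi> x a)"
    and le: "\<And>x a. x \<in> K \<Longrightarrow> f x \<le> \<phi> x a"
    and attained: "\<And>x. x \<in> K \<Longrightarrow> \<exists>a. \<phi> x a = f x"
  shows "\<exists>y\<in>K. \<forall>x\<in>K. f x \<le> f y"
proof -
  obtain m where m: "\<forall>x\<in>K. \<phi> x undefined \<le> \<phi> m undefined"
    using continuous_attains_sup[OF K cont] by blast
  have "f x \<le> \<phi> m undefined" if "x \<in> K" for x
    using le[OF that, of undefined] m that by fastforce
  hence bdd: "bdd_above (f ` K)" by (intro bdd_aboveI) blast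
  obtain l where l: "l \<in> K" "\<forall>a. Sup (f ` K) \<le> \<phi> l a"
    using Sup_le_at_limit_point[where f = f and \<phi> = \<phi>, OF K bdd cont le] by blast
  have "f x \<le> f l" if "x \<in> K" for x
  proof -
    obtain a where a: "\<phi> l a = f l" using attained[OF l(1)] by blast
    have "f x \<le> Sup (f ` K)" using bdd that by (intro cSup_upper) auto
    also have "\<dots> \<le> \<phi> l a" using l(2) by blast
    finally show ?thesis using a by simp
  qed
  thus ?thesis using l(1) by blast
qed

lemma matrix_diff_ldistrib: "(A::real^'n^'n) ** (B - C) = A ** B - A ** C"
  by (simp add: matrix_matrix_mult_def vec_eq_iff sum_subtractf right_diff_distrib)

lemma matrix_diff_rdistrib: "((B::real^'n^'n) - C) ** A = B ** A - C ** A"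
  by (simp add: matrix_matrix_mult_def vec_eq_iff sum_subtractf left_diff_distrib)

lemma matrix_add_rdistrib: "((B::real^'n^'n) + C) ** A = B ** A + C ** A"
  by (simp add: matrix_matrix_mult_def vec_eq_iff sum.distrib distrib_right)

lemma transpose_diff: "transpose ((A::real^'n^'n) - B) = transpose A - transpose B"
  by (simp add: transpose_def vec_eq_iff)

lemma transpose_add: "transpose ((A::real^'n^'n) + B) = transpose A + transpose B"
  by (simp add: transpose_def vec_eq_iff)

lemmas matrix_ring_simps = matrix_diff_ldistrib matrix_diff_rdistrib matrix_add_rdistrib
  matrix_add_ldistrib transpose_diff transpose_add matrix_transpose_mul matrix_mul_assoc
  scalar_matrix_assoc[symmetric] matrix_scalar_ac transpose_scalar

lemma scaleR_matrix_vector_mult: "(c *\<^sub>R A) *v x = c *\<^sub>R (A *v x)" for A :: "real^'n^'n"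
  by (simp add: vec_eq_iff matrix_vector_mult_def sum_distrib_left mult.assoc)

lemma trace_scaleR: "trace (c *\<^sub>R (A::real^'n^'n)) = c * trace A"
  by (simp add: trace_def sum_distrib_left)

lemma matrix_entry_eq_inner: "(F::real^'n^'n)$i$j = axis i 1 \<bullet> (F *v axis j 1)"
  by (simp add: inner_axis' matrix_vector_mul_component inner_axis)

lemma matrix_inv_unique:
  fixes A B :: "real^'n^'n"
  assumes "A ** B = mat 1"
  shows "matrix_inv A = B" "B ** A = mat 1" "invertible A"
proof -
  show BA: "B ** A = mat 1" using assms matrix_left_right_inverse by blast
  have ex: "\<exists>A'. A ** A' = mat 1 \<and> A' ** A = mat 1" using assms BA by blast
  show "invertible A" using ex by (simp add: invertible_def)
  have "A ** matrix_inv A = mat 1 \<and> matrix_inv A ** A = mat 1"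
    unfolding matrix_inv_def using someI_ex[OF ex] .
  hence "matrix_inv A = matrix_inv A ** (A ** B)" using assms by simp
  also have "\<dots> = B" using \<open>A ** matrix_inv A = mat 1 \<and> matrix_inv A ** A = mat 1\<close>
    by (simp add: matrix_mul_assoc)
  finally show "matrix_inv A = B" .
qed

lemma invertible_matrix_inv:
  fixes A :: "real^'n^'n"
  assumes "invertible A"
  shows "A ** matrix_inv A = mat 1" "matrix_inv A ** A = mat 1"
proof -
  obtain B where B: "A ** B = mat 1" using assms by (auto simp: invertible_def)
  show "A ** matrix_inv A = mat 1" using B matrix_inv_unique(1)[OF B] by simp
  show "matrix_inv A ** A = mat 1" using matrix_inv_unique(1,2)[OF B] by simp
qed

lemma matrix_inv_scaleR:
  fixes A :: "real^'n^'n"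
  assumes "invertible A" "k \<noteq> 0"
  shows "matrix_inv (k *\<^sub>R A) = inverse k *\<^sub>R matrix_inv A"
  using assms by (intro matrix_inv_unique(1)) (simp add: matrix_ring_simps invertible_matrix_inv)

lemma matrix_inv_matrix_inv: "invertible A \<Longrightarrow> matrix_inv (matrix_inv A) = A"
  for A :: "real^'n^'n"
  by (intro matrix_inv_unique(1)) (simp add: invertible_matrix_inv)

section \<open>Symmetric and positive semidefinite matrices\<close>

lemma sym_mat_inner: "sym_mat A \<Longrightarrow> x \<bullet> (A *v y) = (A *v x) \<bullet> (y::real^'n)"
  by (metis dot_lmul_matrix sym_mat_def transpose_matrix_vector)

lemma sym_matI_inner:
  fixes A :: "real^'n^'n"
  assumes "\<And>x y. x \<bullet> (A *v y) = (A *v x) \<bullet> y"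
  shows "sym_mat A"
proof -
  have "transpose A *v x = A *v x" for x
  proof -
    have "(transpose A *v x - A *v x) \<bullet> y = 0" for y
      using assms[of x y] dot_lmul_matrix[of x A y] by (simp add: inner_diff_left)
    from this[of "transpose A *v x - A *v x"] show ?thesis by simp
  qed
  thus ?thesis unfolding sym_mat_def by (simp add: matrix_eq)
qed

lemma sym_mat_add [simp]: "sym_mat A \<Longrightarrow> sym_mat B \<Longrightarrow> sym_mat (A + B)"
  for A B :: "real^'n^'n" by (simp add: sym_mat_def transpose_def vec_eq_iff)

lemma sym_mat_diff [simp]: "sym_mat A \<Longrightarrow> sym_mat B \<Longrightarrow> sym_mat (A - B)"
  for A B :: "real^'n^'n" by (simp add: sym_mat_def transpose_def vec_eq_iff)

lemma sym_mat_scaleR [simp]: "sym_mat A \<Longrightarrow> sym_mat (c *\<^sub>R A)"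
  for A :: "real^'n^'n" by (simp add: sym_mat_def transpose_scalar)

lemma sym_mat_mat [simp]: "sym_mat (mat a :: real^'n^'n)"
  by (simp add: sym_mat_def)

lemma pos_semidef_sym: "pos_semidef A \<Longrightarrow> transpose A = A"
  by (simp add: pos_semidef_def sym_mat_def)

lemma pos_def_sym: "pos_def A \<Longrightarrow> transpose A = A"
  by (simp add: pos_def_def sym_mat_def)

lemma pos_def_imp_pos_semidef:
  fixes A :: "real^'n^'n"
  assumes "pos_def A"
  shows "pos_semidef A"
proof -
  have "0 \<le> x \<bullet> (A *v x)" for x
    using assms by (cases "x = 0") (auto simp: pos_def_def less_imp_le)
  thus ?thesis using assms by (simp add: pos_def_def pos_semidef_def)
qed

lemma pos_def_mat_1: "pos_def (mat 1 :: real^'n^'n)"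
  by (simp add: pos_def_def)

lemma pos_semidef_add: "pos_semidef A \<Longrightarrow> pos_semidef B \<Longrightarrow> pos_semidef (A + B)"
  for A B :: "real^'n^'n"
  by (simp add: pos_semidef_def matrix_vector_mult_add_rdistrib inner_add_right)

lemma pos_def_add_pos_semidef: "pos_semidef A \<Longrightarrow> pos_def B \<Longrightarrow> pos_def (A + B)"
  for A B :: "real^'n^'n"
  by (simp add: pos_semidef_def pos_def_def matrix_vector_mult_add_rdistrib inner_add_right add_nonneg_pos)

lemma pos_semidef_scaleR: "a \<ge> 0 \<Longrightarrow> pos_semidef A \<Longrightarrow> pos_semidef (a *\<^sub>R A)"
  for A :: "real^'n^'n"
  by (simp add: pos_semidef_def scaleR_matrix_vector_mult)

lemma pos_def_scaleR: "a > 0 \<Longrightarrow> pos_def A \<Longrightarrow> pos_def (a *\<^sub>R A)"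
  for A :: "real^'n^'n"
  by (simp add: pos_def_def scaleR_matrix_vector_mult)

lemma pos_semidef_convex_combination:
  "pos_semidef F1 \<Longrightarrow> pos_semidef F2 \<Longrightarrow> 0 \<le> t \<Longrightarrow> t \<le> 1
    \<Longrightarrow> pos_semidef ((1 - t) *\<^sub>R F1 + t *\<^sub>R F2)"
  by (intro pos_semidef_add pos_semidef_scaleR) auto

lemma quadratic_form_add_scaleR:
  fixes D :: "real^'n^'n"
  assumes "sym_mat D"
  shows "(x + t *\<^sub>R y) \<bullet> (D *v (x + t *\<^sub>R y))
    = x \<bullet> (D *v x) + 2*t*(x \<bullet> (D *v y)) + t*t*(y \<bullet> (D *v y))"
proof -
  have "y \<bullet> (D *v x) = x \<bullet> (D *v y)" using sym_mat_inner[OF assms, of y x] by (simp add: inner_commute)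
  thus ?thesis by (simp add: algebra_simps)
qed

lemma pos_semidef_cauchy_schwarz:
  fixes P :: "real^'n^'n"
  assumes "pos_semidef P"
  shows "(x \<bullet> (P *v y)) * (x \<bullet> (P *v y)) \<le> (x \<bullet> (P *v x)) * (y \<bullet> (P *v y))"
proof (rule sq_le_mult_if_quadratic_nonneg)
  show "0 \<le> x \<bullet> (P *v x)" "0 \<le> y \<bullet> (P *v y)" using assms by (auto simp: pos_semidef_def)
  fix t
  have "0 \<le> (x + t *\<^sub>R y) \<bullet> (P *v (x + t *\<^sub>R y))" using assms by (simp add: pos_semidef_def)
  also have "\<dots> = x \<bullet> (P *v x) + 2 * t * (x \<bullet> (P *v y)) + t * t * (y \<bullet> (P *v y))"
    using assms by (intro quadratic_form_add_scaleR) (simp add: pos_semidef_def)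
  finally show "0 \<le> x \<bullet> (P *v x) + 2 * t * (x \<bullet> (P *v y)) + t * t * (y \<bullet> (P *v y))" .
qed

lemma inner_transpose_matrix_vector: "x \<bullet> (transpose B *v z) = (B *v x) \<bullet> (z::real^'n)"
  for B :: "real^'n^'n"
  by (metis dot_lmul_matrix inner_commute transpose_matrix_vector)

lemma quadratic_form_congruence:
  "x \<bullet> ((transpose B ** Y ** B) *v x) = (B *v x) \<bullet> (Y *v (B *v x))" for B Y :: "real^'n^'n"
proof -
  have "(transpose B ** Y ** B) *v x = transpose B *v (Y *v (B *v x))"
    by (simp add: matrix_vector_mul_assoc matrix_mul_assoc)
  thus ?thesis by (simp only: inner_transpose_matrix_vector)
qed

lemma sym_mat_congruence: "sym_mat Y \<Longrightarrow> sym_mat (transpose B ** Y ** B)"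
  for B Y :: "real^'n^'n"
  by (simp add: sym_mat_def matrix_transpose_mul matrix_mul_assoc)

lemma pos_semidef_congruence: "pos_semidef Y \<Longrightarrow> pos_semidef (transpose B ** Y ** B)"
  for B Y :: "real^'n^'n"
  by (simp add: pos_semidef_def sym_mat_congruence quadratic_form_congruence)

lemma pos_semidef_congruence': "pos_semidef Y \<Longrightarrow> pos_semidef (B ** Y ** transpose B)"
  for B Y :: "real^'n^'n"
  using pos_semidef_congruence[of Y "transpose B"] by simp

lemma pos_def_congruence:
  fixes B Y :: "real^'n^'n"
  assumes "pos_def Y" and "\<And>x. B *v x = 0 \<Longrightarrow> x = 0"
  shows "pos_def (transpose B ** Y ** B)"
  using assms by (auto simp: pos_def_def sym_mat_congruence quadratic_form_congruence)

lemma pos_def_invertible: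
  fixes M :: "real^'n^'n"
  assumes "pos_def M"
  shows "invertible M"
proof -
  have "\<forall>x. M *v x = 0 \<longrightarrow> x = 0" using assms unfolding pos_def_def by force
  thus ?thesis using matrix_left_invertible_ker invertible_left_inverse by blast
qed

lemma sym_mat_matrix_inv:
  fixes M :: "real^'n^'n"
  assumes "sym_mat M" "invertible M"
  shows "sym_mat (matrix_inv M)"
proof -
  have "M ** transpose (matrix_inv M) = mat 1"
    using invertible_matrix_inv(2)[OF assms(2)] assms(1)
    by (metis matrix_transpose_mul sym_mat_def transpose_mat)
  hence "matrix_inv M = transpose (matrix_inv M)" by (rule matrix_inv_unique)
  thus ?thesis by (simp add: sym_mat_def)
qed

lemma pos_def_matrix_inv:
  fixes M :: "real^'n^'n"
  assumes "pos_def M"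
  shows "pos_def (matrix_inv M)"
proof -
  have inv: "invertible M" by (rule pos_def_invertible[OF assms])
  have sM: "sym_mat M" using assms by (simp add: pos_def_def)
  have "x \<bullet> (matrix_inv M *v x) > 0" if "x \<noteq> 0" for x
  proof -
    let ?y = "matrix_inv M *v x"
    have My: "M *v ?y = x" using invertible_matrix_inv(1)[OF inv] by (simp add: matrix_vector_mul_assoc)
    hence "?y \<noteq> 0" using that by auto
    hence "?y \<bullet> (M *v ?y) > 0" using assms by (simp add: pos_def_def)
    thus ?thesis using My by (simp add: inner_commute)
  qed
  thus ?thesis using sym_mat_matrix_inv[OF sM inv] by (simp add: pos_def_def)
qed

section \<open>Spectral theorem and square roots\<close>

lemma continuous_on_quadratic_form: "continuous_on S (\<lambda>x. x \<bullet> ((D::real^'n^'n) *v x))"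
  by (intro continuous_intros linear_continuous_on matrix_vector_mul_bounded_linear)

lemma rayleigh_max_on_subspace:
  fixes D :: "real^'n^'n"
  assumes U: "subspace U" and ne: "U \<noteq> {0}"
  shows "\<exists>v\<in>U. norm v = 1 \<and> (\<forall>y\<in>U. y \<bullet> (D *v y) \<le> (v \<bullet> (D *v v)) * (y \<bullet> y))"
proof -
  let ?S = "sphere 0 1 \<inter> U"
  have cS: "compact ?S" using U by (intro compact_Int_closed compact_sphere closed_subspace)
  obtain x where x: "x \<in> U" "x \<noteq> 0" using ne U subspace_0 by blast
  have "(1/norm x) *\<^sub>R x \<in> ?S" using x U by (auto simp: subspace_scale)
  hence neS: "?S \<noteq> {}" by blast
  obtain v where v: "v \<in> ?S" and vmax: "\<forall>y\<in>?S. y \<bullet> (D *v y) \<le> v \<bullet> (D *v v)"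
    using continuous_attains_sup[OF cS neS continuous_on_quadratic_form] by blast
  have "y \<bullet> (D *v y) \<le> (v \<bullet> (D *v v)) * (y \<bullet> y)" if y: "y \<in> U" for y
  proof (cases "y = 0")
    case False
    let ?z = "(1/norm y) *\<^sub>R y"
    have "?z \<in> ?S" using y False U by (auto simp: subspace_scale)
    hence "?z \<bullet> (D *v ?z) \<le> v \<bullet> (D *v v)" using vmax by blast
    hence "(y \<bullet> (D *v y)) / (norm y)\<^sup>2 \<le> v \<bullet> (D *v v)"
      by (simp add: matrix_vector_mult_scaleR power2_eq_square)
    thus ?thesis using False by (simp add: divide_le_eq power2_norm_eq_inner)
  qed simp
  thus ?thesis using v by auto
qed

lemma rayleigh_max:
  fixes D :: "real^'n^'n"
  shows "\<exists>v. norm v = 1 \<and> (\<forall>y. y \<bullet> (D *v y) \<le> (v \<bullet> (D *v v)) * (y \<bullet> y))"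
proof -
  have "axis undefined (1::real) \<noteq> (0::real^'n)" by simp
  hence "(UNIV :: (real^'n) set) \<noteq> {0}" by auto
  thus ?thesis using rayleigh_max_on_subspace[OF subspace_UNIV] by blast
qed

text \<open>The Rayleigh quotient is stationary at its maximiser.\<close>

lemma rayleigh_max_eigenvector:
  fixes D :: "real^'n^'n"
  assumes sym: "sym_mat D" and U: "subspace U" and inv: "\<forall>x\<in>U. D *v x \<in> U"
    and vU: "v \<in> U" and vn: "norm v = 1"
    and bound: "\<forall>y\<in>U. y \<bullet> (D *v y) \<le> (v \<bullet> (D *v v)) * (y \<bullet> y)"
  shows "D *v v = (v \<bullet> (D *v v)) *\<^sub>R v"
proof -
  define \<mu> where "\<mu> = v \<bullet> (D *v v)"
  define b where "b = (\<lambda>x y. \<mu> * (x \<bullet> y) - x \<bullet> (D *v y))"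
  have b_nonneg: "0 \<le> b y y" if "y \<in> U" for y using bound that by (simp add: b_def \<mu>_def)
  have bvv: "b v v = 0" using vn by (simp add: b_def \<mu>_def dot_square_norm)
  have "b v y = 0" if y: "y \<in> U" for y
  proof -
    have "b v y * b v y \<le> b v v * b y y"
    proof (rule sq_le_mult_if_quadratic_nonneg)
      show "0 \<le> b v v" "0 \<le> b y y" using b_nonneg vU y by auto
      fix t
      have "0 \<le> b (v + t *\<^sub>R y) (v + t *\<^sub>R y)" using b_nonneg vU y U by (simp add: subspace_add subspace_scale)
      also have "b (v + t *\<^sub>R y) (v + t *\<^sub>R y) = b v v + 2*t*b v y + t*t*b y y"
        unfolding b_def using quadratic_form_add_scaleR[OF sym, of v t y]
        by (simp add: algebra_simps inner_commute) auto
      finally show "0 \<le> b v v + 2*t*b v y + t*t*b y y" .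
    qed
    thus ?thesis using bvv by (simp add: mult_le_0_iff, linarith)
  qed
  moreover have "b v y = (\<mu> *\<^sub>R v - D *v v) \<bullet> y" for y
    unfolding b_def using sym_mat_inner[OF sym, of v y] by (simp add: inner_diff_left)
  moreover have "\<mu> *\<^sub>R v - D *v v \<in> U" using vU inv U by (simp add: subspace_diff subspace_scale)
  ultimately have "(\<mu> *\<^sub>R v - D *v v) \<bullet> (\<mu> *\<^sub>R v - D *v v) = 0" by metis
  thus ?thesis by (simp add: \<mu>_def)
qed

lemma invariant_orthogonal_complement:
  fixes D :: "real^'n^'n"
  assumes "sym_mat D" "\<forall>x\<in>U. D *v x \<in> U" "D *v v = \<mu> *\<^sub>R v"
  shows "\<forall>x\<in>{x \<in> U. v \<bullet> x = 0}. D *v x \<in> {x \<in> U. v \<bullet> x = 0}"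
  using assms sym_mat_inner[OF assms(1), of v] by simp

lemma subspace_subset_span_insert_orthogonal:
  fixes v :: "real^'n"
  assumes U: "subspace U" "v \<in> U" and vv: "v \<bullet> v = 1" and B: "{x \<in> U. v \<bullet> x = 0} \<subseteq> span B"
  shows "U \<subseteq> span (insert v B)"
proof
  fix x assume x: "x \<in> U"
  have "x - (v \<bullet> x) *\<^sub>R v \<in> {x \<in> U. v \<bullet> x = 0}"
    using x U vv by (auto simp: subspace_diff subspace_scale inner_diff_right)
  hence "x - (v \<bullet> x) *\<^sub>R v \<in> span (insert v B)" using B span_mono[of B "insert v B"] by blast
  moreover have "(v \<bullet> x) *\<^sub>R v \<in> span (insert v B)" by (simp add: span_base span_scale)
  ultimately have "(x - (v \<bullet> x) *\<^sub>R v) + (v \<bullet> x) *\<^sub>R v \<in> span (insert v B)" by (rule span_add)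
  thus "x \<in> span (insert v B)" by simp
qed

lemma sym_mat_invariant_subspace_eigenbasis:
  fixes D :: "real^'n^'n"
  assumes sym: "sym_mat D"
  shows "subspace U \<Longrightarrow> (\<forall>x\<in>U. D *v x \<in> U) \<Longrightarrow> \<exists>B. B \<subseteq> U \<and> finite B \<and> pairwise orthogonal B \<and>
     (\<forall>b\<in>B. norm b = 1 \<and> D *v b = (b \<bullet> (D *v b)) *\<^sub>R b) \<and> U \<subseteq> span B"
proof (induction "dim U" arbitrary: U rule: less_induct)
  case less
  show ?case
  proof (cases "U = {0}")
    case True then show ?thesis by (intro exI[of _ "{}"]) auto
  next
    case False
    obtain v where v: "v \<in> U" "norm v = 1"
      and bound: "\<forall>y\<in>U. y \<bullet> (D *v y) \<le> (v \<bullet> (D *v v)) * (y \<bullet> y)"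
      using rayleigh_max_on_subspace[OF less.prems(1) False] by blast
    have eigen: "D *v v = (v \<bullet> (D *v v)) *\<^sub>R v"
      by (rule rayleigh_max_eigenvector[OF sym less.prems v bound])
    have vv: "v \<bullet> v = 1" using v(2) by (simp add: dot_square_norm)
    define U' where "U' = {x \<in> U. v \<bullet> x = 0}"
    have sU': "subspace U'" using less.prems(1) unfolding U'_def subspace_def
      by (auto simp: inner_add_right)
    have "v \<notin> U'" using vv unfolding U'_def by auto
    hence "U' \<subset> U" using v(1) unfolding U'_def by blast
    hence "span U' \<subset> span U" using sU' less.prems(1) by (metis span_eq_iff)
    hence "dim U' < dim U" by (metis dim_psubset)
    from less.hyps[OF this sU'] obtain B' where B': "B' \<subseteq> U'" "finite B'" "pairwise orthogonal B'"
      "\<forall>b\<in>B'. norm b = 1 \<and> D *v b = (b \<bullet> (D *v b)) *\<^sub>R b" "U' \<subseteq> span B'"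
      using invariant_orthogonal_complement[OF sym less.prems(2) eigen] unfolding U'_def by blast
    have "insert v B' \<subseteq> U" using B'(1) v(1) U'_def by auto
    moreover have "pairwise orthogonal (insert v B')"
      using B'(1,3) unfolding pairwise_insert U'_def orthogonal_def by (auto simp: inner_commute)
    moreover have "U \<subseteq> span (insert v B')"
      using subspace_subset_span_insert_orthogonal[OF less.prems(1) v(1) vv] B'(5) by (simp add: U'_def)
    ultimately show ?thesis using B'(2,4) v(2) eigen by (intro exI[of _ "insert v B'"]) auto
  qed
qed

lemma orthonormal_expansion:
  fixes B :: "(real^'n) set"
  assumes "finite B" "pairwise orthogonal B" "\<forall>b\<in>B. norm b = 1" "x \<in> span B"
  shows "x = (\<Sum>b\<in>B. (b \<bullet> x) *\<^sub>R b)"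
proof -
  have bb: "b \<bullet> b = 1" if "b \<in> B" for b using assms(3) that by (simp add: dot_square_norm)
  let ?y = "x - (\<Sum>b\<in>B. (b \<bullet> x / (b \<bullet> b)) *\<^sub>R b)"
  have "?y \<in> span B" using assms(4)
    by (simp add: span_diff span_sum span_scale span_base)
  from Gram_Schmidt_step[OF assms(2) this, of x] have "?y \<bullet> ?y = 0" by (simp add: orthogonal_def)
  hence "?y = 0" by simp
  moreover have "(\<Sum>b\<in>B. (b \<bullet> x / (b \<bullet> b)) *\<^sub>R b) = (\<Sum>b\<in>B. (b \<bullet> x) *\<^sub>R b)"
    by (rule sum.cong) (auto simp: bb)
  ultimately show ?thesis by simp
qed

lemma sym_mat_orthonormal_eigenbasis:
  fixes D :: "real^'n^'n"
  assumes sym: "sym_mat D"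
  obtains B where "finite B" "pairwise orthogonal B" "\<forall>b\<in>B. norm b = 1"
    "\<forall>b\<in>B. D *v b = (b \<bullet> (D *v b)) *\<^sub>R b"
    "\<forall>x. D *v x = (\<Sum>b\<in>B. ((b \<bullet> (D *v b)) * (b \<bullet> x)) *\<^sub>R b)"
proof -
  obtain B where B: "finite B" "pairwise orthogonal B" "\<forall>b\<in>B. norm b = 1"
    "\<forall>b\<in>B. D *v b = (b \<bullet> (D *v b)) *\<^sub>R b" "UNIV \<subseteq> span B"
    using sym_mat_invariant_subspace_eigenbasis[OF sym, of UNIV] by auto
  have ex: "x = (\<Sum>b\<in>B. (b \<bullet> x) *\<^sub>R b)" for x using orthonormal_expansion[OF B(1-3)] B(5) by blast
  have "D *v x = (\<Sum>b\<in>B. ((b \<bullet> (D *v b)) * (b \<bullet> x)) *\<^sub>R b)" for x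
  proof -
    have "D *v x = (\<Sum>b\<in>B. (b \<bullet> x) *\<^sub>R (D *v b))"
      by (subst ex[of x]) (simp add: linear_sum[OF matrix_vector_mul_linear] matrix_vector_mult_scaleR)
    also have "\<dots> = (\<Sum>b\<in>B. ((b \<bullet> (D *v b)) * (b \<bullet> x)) *\<^sub>R b)"
    proof (rule sum.cong)
      fix b assume "b \<in> B"
      hence "(b \<bullet> x) *\<^sub>R (D *v b) = (b \<bullet> x) *\<^sub>R ((b \<bullet> (D *v b)) *\<^sub>R b)" using B(4) by simp
      thus "(b \<bullet> x) *\<^sub>R (D *v b) = ((b \<bullet> (D *v b)) * (b \<bullet> x)) *\<^sub>R b" by (simp add: mult.commute)
    qed simp
    finally show ?thesis .
  qed
  thus ?thesis using that B(1-4) by blast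
qed

lemma inner_orthonormal_sum:
  fixes B :: "(real^'n) set"
  assumes "finite B" "pairwise orthogonal B" "\<forall>b\<in>B. norm b = 1" "b \<in> B"
  shows "b \<bullet> (\<Sum>c\<in>B. g c *\<^sub>R c) = g b"
proof -
  have "b \<bullet> (\<Sum>c\<in>B. g c *\<^sub>R c) = (\<Sum>c\<in>B. g c * (b \<bullet> c))" by (simp add: inner_sum_right)
  also have "\<dots> = (\<Sum>c\<in>B. if c = b then g b else 0)"
  proof (rule sum.cong)
    fix c assume c: "c \<in> B"
    show "g c * (b \<bullet> c) = (if c = b then g b else 0)"
    proof (cases "c = b")
      case True thus ?thesis using assms(3,4) by (simp add: dot_square_norm)
    next
      case False thus ?thesis using assms(2,4) c by (simp add: pairwise_def orthogonal_def)
    qed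
  qed simp
  also have "\<dots> = g b" using assms(1,4) by simp
  finally show ?thesis .
qed

lemma pos_semidef_sqrt:
  fixes P :: "real^'n^'n"
  assumes "pos_semidef P"
  shows "\<exists>R. pos_semidef R \<and> R ** R = P"
proof -
  have sym: "sym_mat P" using assms by (simp add: pos_semidef_def)
  obtain B where B: "finite B" "pairwise orthogonal B" "\<forall>b\<in>B. norm b = 1"
    and "\<forall>b\<in>B. P *v b = (b \<bullet> (P *v b)) *\<^sub>R b"
    and P: "\<forall>x. P *v x = (\<Sum>b\<in>B. ((b \<bullet> (P *v b)) * (b \<bullet> x)) *\<^sub>R b)"
    by (rule sym_mat_orthonormal_eigenbasis[OF sym])
  define l where "l b = b \<bullet> (P *v b)" for b
  have l0: "l b \<ge> 0" for b using assms by (simp add: pos_semidef_def l_def)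
  define f where "f x = (\<Sum>b\<in>B. (sqrt (l b) * (b \<bullet> x)) *\<^sub>R b)" for x
  have "linear f" unfolding f_def
    by (intro linear_compose_sum) (auto intro!: linearI simp: algebra_simps)
  then obtain R where Rv: "\<And>x. R *v x = f x"
    using matrix_works[of f] by (metis linear_matrix_vector_mul_eq)
  have inner_f: "x \<bullet> f y = (\<Sum>b\<in>B. sqrt (l b) * (b \<bullet> x) * (b \<bullet> y))" for x y
    unfolding f_def by (simp add: inner_sum_right algebra_simps inner_commute)
  have "sym_mat R"
    by (rule sym_matI_inner) (simp add: Rv inner_f inner_commute[of "f _"] mult.commute mult.left_commute)
  moreover have "x \<bullet> (R *v x) = (\<Sum>b\<in>B. sqrt (l b) * (b \<bullet> x)\<^sup>2)" for x
    by (simp add: Rv inner_f power2_eq_square mult.assoc)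
  ultimately have "pos_semidef R" unfolding pos_semidef_def using l0 by (simp add: sum_nonneg)
  moreover have "R *v (R *v x) = P *v x" for x
  proof -
    have "b \<bullet> f x = sqrt (l b) * (b \<bullet> x)" if "b \<in> B" for b
      unfolding f_def by (rule inner_orthonormal_sum[OF B that])
    hence "R *v (R *v x) = (\<Sum>b\<in>B. (l b * (b \<bullet> x)) *\<^sub>R b)"
      unfolding Rv f_def[of "f x"] using l0 by (intro sum.cong) (auto simp: real_sqrt_mult[symmetric])
    also have "\<dots> = P *v x" using P unfolding l_def by metis
    finally show ?thesis .
  qed
  hence "R ** R = P" by (simp add: matrix_eq matrix_vector_mul_assoc)
  ultimately show ?thesis by blast
qed

lemma sym_mat_nonzero_eigenvalue:
  fixes D :: "real^'n^'n"
  assumes sym: "sym_mat D" and nz: "D \<noteq> 0"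
  shows "\<exists>b l. norm b = 1 \<and> D *v b = l *\<^sub>R b \<and> l \<noteq> 0"
proof (rule ccontr)
  assume H: "\<not> ?thesis"
  obtain B where "finite B" "pairwise orthogonal B"
    and B: "\<forall>b\<in>B. norm b = 1" "\<forall>b\<in>B. D *v b = (b \<bullet> (D *v b)) *\<^sub>R b"
    and D: "\<forall>x. D *v x = (\<Sum>b\<in>B. ((b \<bullet> (D *v b)) * (b \<bullet> x)) *\<^sub>R b)"
    by (rule sym_mat_orthonormal_eigenbasis[OF sym])
  have "b \<bullet> (D *v b) = 0" if "b \<in> B" for b using H B that by blast
  hence "D *v x = 0" for x using D[rule_format, of x] by simp
  hence "D = 0" by (simp add: matrix_eq)
  thus False using nz by simp
qed

lemma pos_def_sqrt_unique:
  fixes R1 R2 :: "real^'n^'n"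
  assumes p1: "pos_def R1" and p2: "pos_def R2" and eq: "R1 ** R1 = R2 ** R2"
  shows "R1 = R2"
proof (rule ccontr)
  assume ne: "R1 \<noteq> R2"
  let ?D = "R1 - R2"
  have symD: "sym_mat ?D" using p1 p2 by (simp add: pos_def_def sym_mat_def transpose_def vec_eq_iff)
  obtain b l where b: "norm b = 1" "?D *v b = l *\<^sub>R b" "l \<noteq> 0"
    using sym_mat_nonzero_eigenvalue[OF symD] ne by auto
  have bnz: "b \<noteq> 0" using b(1) by auto
  have q1: "b \<bullet> (R1 *v b) > 0" and q2: "b \<bullet> (R2 *v b) > 0" using p1 p2 bnz by (auto simp: pos_def_def)
  have s2: "sym_mat R2" using p2 by (simp add: pos_def_def)
  have vv: "R1 *v (R1 *v b) = R2 *v (R2 *v b)" using eq by (simp add: matrix_vector_mul_assoc)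
  have "b \<bullet> (R1 *v (?D *v b)) + b \<bullet> (?D *v (R2 *v b)) = 0"
    using vv by (simp add: matrix_vector_mult_diff_rdistrib matrix_vector_mult_diff_distrib inner_diff_right)
  moreover have "b \<bullet> (?D *v (R2 *v b)) = (?D *v b) \<bullet> (R2 *v b)" by (rule sym_mat_inner[OF symD])
  moreover have "b \<bullet> (R1 *v (?D *v b)) = l * (b \<bullet> (R1 *v b))" using b(2)
    by (simp add: matrix_vector_mult_scaleR)
  moreover have "(?D *v b) \<bullet> (R2 *v b) = l * (b \<bullet> (R2 *v b))" using b(2) by simp
  ultimately have "l * (b \<bullet> (R1 *v b)) + l * (b \<bullet> (R2 *v b)) = 0" by simp
  hence "l * (b \<bullet> (R1 *v b) + b \<bullet> (R2 *v b)) = 0" by (simp add: algebra_simps)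
  thus False using b(3) q1 q2 by simp
qed

lemma pos_def_if_square_pos_def:
  fixes R :: "real^'n^'n"
  assumes R: "pos_semidef R" and RR: "pos_def (R ** R)"
  shows "pos_def R"
proof -
  have "x \<bullet> (R *v x) \<noteq> 0" if "x \<noteq> 0" for x
  proof
    assume "x \<bullet> (R *v x) = 0"
    hence "(x \<bullet> (R *v (R *v x))) * (x \<bullet> (R *v (R *v x))) \<le> 0"
      using pos_semidef_cauchy_schwarz[OF R, of x "R *v x"] by simp
    moreover have "x \<bullet> (R *v (R *v x)) > 0"
      using RR that by (simp add: pos_def_def matrix_vector_mul_assoc)
    ultimately show False by (simp add: mult_le_0_iff)
  qed
  thus ?thesis using R by (auto simp: pos_def_def pos_semidef_def order_less_le)
qed

lemma pos_def_inv_sqrt: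
  fixes M :: "real^'n^'n"
  assumes "pos_def M"
  shows "pos_def (inv_sqrt M)" "inv_sqrt M ** inv_sqrt M = matrix_inv M"
proof -
  have pd: "pos_def (matrix_inv M)" by (rule pos_def_matrix_inv[OF assms])
  hence "pos_semidef (matrix_inv M)" by (rule pos_def_imp_pos_semidef)
  then obtain R where R: "pos_semidef R" "R ** R = matrix_inv M" using pos_semidef_sqrt by blast
  with pd have R: "pos_def R" "R ** R = matrix_inv M" using pos_def_if_square_pos_def[of R] by simp_all
  have "\<exists>!R. pos_def R \<and> R ** R = matrix_inv M"
  proof (rule ex1I[of _ R])
    show "pos_def R \<and> R ** R = matrix_inv M" using R by simp
    fix R' assume "pos_def R' \<and> R' ** R' = matrix_inv M"
    thus "R' = R" using pos_def_sqrt_unique[of R' R] R by simp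
  qed
  hence "pos_def (inv_sqrt M) \<and> inv_sqrt M ** inv_sqrt M = matrix_inv M"
    unfolding inv_sqrt_def by (rule theI')
  thus "pos_def (inv_sqrt M)" "inv_sqrt M ** inv_sqrt M = matrix_inv M" by auto
qed

lemma pos_def_bounded_below:
  fixes V :: "real^'n^'n"
  assumes "pos_def V"
  shows "\<exists>k>0. \<forall>y. k * (y \<bullet> y) \<le> y \<bullet> (V *v y)"
proof -
  obtain v where v: "norm v = 1" and bd: "\<forall>y. y \<bullet> (- V *v y) \<le> (v \<bullet> (- V *v v)) * (y \<bullet> y)"
    using rayleigh_max by blast
  have neg: "(- V) *v y = - (V *v y)" for y by (simp add: vec_eq_iff matrix_vector_mult_def sum_negf)
  have "v \<noteq> 0" using v by auto
  hence "v \<bullet> (V *v v) > 0" using assms by (simp add: pos_def_def)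
  moreover have "(v \<bullet> (V *v v)) * (y \<bullet> y) \<le> y \<bullet> (V *v y)" for y using bd neg by simp
  ultimately show ?thesis by blast
qed

section \<open>The Frobenius inner product and the spectral norm\<close>

lemma trace_transpose_mult: "trace (transpose A ** B) = A \<bullet> (B::real^'n^'n)"
  unfolding trace_def matrix_matrix_mult_def transpose_def inner_vec_def inner_real_def
  by (simp, subst sum.swap, simp add: mult.commute)

lemma frob_inner_eq_inner: "frob_inner A B = A \<bullet> B"
  by (simp add: frob_inner_def trace_transpose_mult)

lemma inner_mat_1: "mat 1 \<bullet> F = trace (F::real^'n^'n)"
  by (simp flip: trace_transpose_mult)

lemma inner_matrix_mult_left: "X \<bullet> (A ** B) = (transpose A ** X) \<bullet> B"
  for X A B :: "real^'n^'n"
  by (simp flip: trace_transpose_mult add: matrix_transpose_mul matrix_mul_assoc)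

lemma inner_matrix_mult_right: "X \<bullet> (A ** B) = (X ** transpose B) \<bullet> A"
  for X A B :: "real^'n^'n"
proof -
  have "X \<bullet> (A ** B) = trace ((transpose X ** A) ** B)"
    by (simp flip: trace_transpose_mult matrix_mul_assoc)
  also have "\<dots> = trace (B ** transpose X ** A)" by (simp add: trace_mul_sym[of _ B] matrix_mul_assoc)
  finally show ?thesis by (simp flip: trace_transpose_mult add: matrix_transpose_mul)
qed

lemma inner_transpose: "transpose A \<bullet> transpose B = A \<bullet> (B::real^'n^'n)"
proof -
  have "transpose A \<bullet> transpose B = trace (A ** transpose B)" by (simp flip: trace_transpose_mult)
  also have "\<dots> = trace (transpose B ** A)" by (rule trace_mul_sym)
  finally show ?thesis by (simp add: trace_transpose_mult inner_commute)
qed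

lemma pos_semidef_trace_nonneg: "pos_semidef X \<Longrightarrow> trace X \<ge> 0"
  for X :: "real^'n^'n"
proof -
  have "trace X = (\<Sum>i\<in>UNIV. axis i 1 \<bullet> (X *v axis i 1))"
    by (simp add: trace_def inner_axis' matrix_vector_mul_component inner_axis)
  thus "pos_semidef X \<Longrightarrow> trace X \<ge> 0" by (simp add: pos_semidef_def sum_nonneg)
qed

lemma pos_semidef_inner_nonneg:
  fixes X Y :: "real^'n^'n"
  assumes "pos_semidef X" "pos_semidef Y"
  shows "0 \<le> X \<bullet> Y"
proof -
  obtain R where R: "pos_semidef R" "R ** R = X" using pos_semidef_sqrt[OF assms(1)] by blast
  have "X \<bullet> Y = trace (R ** (R ** Y))"
    using R pos_semidef_sym[OF assms(1)] by (simp flip: trace_transpose_mult add: matrix_mul_assoc)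
  also have "\<dots> = trace (transpose R ** Y ** R)"
    using trace_mul_sym[of R "R ** Y"] pos_semidef_sym[OF R(1)] by simp
  also have "\<dots> \<ge> 0" using pos_semidef_congruence[OF assms(2)] by (rule pos_semidef_trace_nonneg)
  finally show ?thesis .
qed

lemma spec_norm_pos_semidef:
  fixes P :: "real^'n^'n"
  assumes psd: "pos_semidef P"
  shows "spec_norm P \<ge> 0" "\<exists>x. norm x = 1 \<and> x \<bullet> (P *v x) = spec_norm P"
    "\<And>y. y \<bullet> (P *v y) \<le> spec_norm P * (y \<bullet> y)"
proof -
  have sym: "sym_mat P" using psd by (simp add: pos_semidef_def)
  obtain v where v: "norm v = 1" and bd: "\<forall>y. y \<bullet> (P *v y) \<le> (v \<bullet> (P *v v)) * (y \<bullet> y)"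
    using rayleigh_max by blast
  define \<mu> where "\<mu> = v \<bullet> (P *v v)"
  have mu0: "\<mu> \<ge> 0" using psd by (simp add: pos_semidef_def \<mu>_def)
  have "norm (P *v y) \<le> \<mu> * norm y" for y
  proof -
    let ?z = "P *v y"
    have "(?z \<bullet> ?z) * (?z \<bullet> ?z) \<le> (y \<bullet> (P *v y)) * (?z \<bullet> (P *v ?z))"
      using pos_semidef_cauchy_schwarz[OF psd, of y ?z] sym_mat_inner[OF sym, of y ?z] by simp
    also have "\<dots> \<le> (\<mu> * (y \<bullet> y)) * (\<mu> * (?z \<bullet> ?z))"
      using bd psd by (intro mult_mono) (auto simp: pos_semidef_def mu0 \<mu>_def)
    finally have "(?z \<bullet> ?z) * (?z \<bullet> ?z) \<le> (\<mu> * \<mu> * (y \<bullet> y)) * (?z \<bullet> ?z)"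
      by (simp add: algebra_simps)
    hence "?z \<bullet> ?z \<le> \<mu> * \<mu> * (y \<bullet> y)"
      by (cases "?z = 0") (auto simp: mu0)
    moreover have "(\<mu> * norm y)\<^sup>2 = \<mu> * \<mu> * (y \<bullet> y)"
      by (simp add: power_mult_distrib dot_square_norm power2_eq_square)
    ultimately have "(norm ?z)\<^sup>2 \<le> (\<mu> * norm y)\<^sup>2" by (simp add: power2_norm_eq_inner)
    thus ?thesis using mu0 by (simp add: power2_le_iff_abs_le)
  qed
  hence le: "spec_norm P \<le> \<mu>" unfolding spec_norm_def by (intro onorm_le) simp
  have "\<mu> \<le> norm (P *v v)" using norm_cauchy_schwarz[of v "P *v v"] v by (simp add: \<mu>_def)
  also have "\<dots> \<le> spec_norm P"
    using le_onorm[of "\<lambda>x. P *v x" v] v by (simp add: spec_norm_def)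
  finally have eq: "spec_norm P = \<mu>" using le by simp
  show "spec_norm P \<ge> 0" using eq mu0 by simp
  show "\<exists>x. norm x = 1 \<and> x \<bullet> (P *v x) = spec_norm P" using v eq by (auto simp: \<mu>_def)
  show "\<And>y. y \<bullet> (P *v y) \<le> spec_norm P * (y \<bullet> y)" using bd eq by (simp add: \<mu>_def)
qed

lemma inner_le_spec_norm_mult_trace:
  fixes P F :: "real^'n^'n"
  assumes "pos_semidef P" "pos_semidef F"
  shows "P \<bullet> F \<le> spec_norm P * trace F"
proof -
  have "pos_semidef (spec_norm P *\<^sub>R mat 1 - P)" using assms(1) spec_norm_pos_semidef(3)[OF assms(1)]
    by (auto simp: pos_semidef_def matrix_vector_mult_diff_rdistrib inner_diff_right scaleR_matrix_vector_mult)
  hence "0 \<le> (spec_norm P *\<^sub>R mat 1 - P) \<bullet> F" using assms(2) by (rule pos_semidef_inner_nonneg)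
  thus ?thesis by (simp add: inner_diff_left inner_mat_1)
qed

definition outer :: "real^'n \<Rightarrow> real^'n^'n" where
  "outer x = (\<chi> i j. x$i * x$j)"

lemma outer_matrix_vector_mult: "outer x *v z = (x \<bullet> z) *\<^sub>R x"
  by (simp add: outer_def vec_eq_iff matrix_vector_mult_def inner_vec_def sum_distrib_left
      mult.commute mult.left_commute)

lemma pos_semidef_outer: "pos_semidef (outer x)"
  by (simp add: pos_semidef_def sym_mat_def outer_def transpose_def vec_eq_iff
      outer_matrix_vector_mult[unfolded outer_def] mult.commute inner_commute)

lemma trace_outer: "trace (outer x) = x \<bullet> x"
  by (simp add: outer_def trace_def inner_vec_def)

lemma inner_outer: "P \<bullet> outer x = x \<bullet> (P *v x)"
  by (simp add: outer_def inner_vec_def matrix_vector_mult_def sum_distrib_left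
      mult.commute mult.left_commute)

lemma pos_semidef_entry_bound:
  fixes F :: "real^'n^'n"
  assumes F: "pos_semidef F" and tr: "trace F \<le> b"
  shows "\<bar>F$i$j\<bar> \<le> b"
proof -
  have d0: "F$k$k \<ge> 0" for k using F by (simp add: matrix_entry_eq_inner pos_semidef_def)
  have dle: "F$k$k \<le> b" for k
  proof -
    have "F$k$k \<le> (\<Sum>l\<in>UNIV. F$l$l)" using d0 by (intro member_le_sum) auto
    thus ?thesis using tr by (simp add: trace_def)
  qed
  have "F$i$j * F$i$j \<le> F$i$i * F$j$j"
    using pos_semidef_cauchy_schwarz[OF F, of "axis i 1" "axis j 1"] by (simp add: matrix_entry_eq_inner)
  also have "\<dots> \<le> b * b" using d0 dle by (intro mult_mono) (auto intro: order_trans)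
  finally have "(F$i$j)\<^sup>2 \<le> b\<^sup>2" by (simp add: power2_eq_square)
  moreover have "b \<ge> 0" using d0[of i] dle[of i] by linarith
  ultimately show ?thesis using power2_le_iff_abs_le by blast
qed

lemma pos_def_with_trace:
  assumes "c > 0" shows "\<exists>E :: real^'n^'n. pos_def E \<and> trace E = c"
  using assms by (intro exI[of _ "(c / real CARD('n)) *\<^sub>R mat 1"])
    (auto simp: trace_scaleR trace_I intro!: pos_def_scaleR pos_def_mat_1)

section \<open>A trace-constrained minimax problem\<close>

lemma complete_square_identity:
  fixes A F G Gi :: "real^'n^'n"
  assumes GGi: "G ** Gi = mat 1" and GiG: "Gi ** G = mat 1"
    and sF: "transpose F = F" and sGi: "transpose Gi = Gi"
  shows "(mat 1 - A) ** F ** transpose (mat 1 - A) + A ** (G - F) ** transpose A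
       = (A - F ** Gi) ** G ** transpose (A - F ** Gi) + (F - F ** Gi ** F)"
proof -
  have c1: "X ** G ** Gi = X" and c2: "X ** Gi ** G = X" for X :: "real^'n^'n"
    using GGi GiG by (simp_all flip: matrix_mul_assoc)
  show ?thesis by (simp add: matrix_ring_simps sF sGi c1 c2 GGi GiG algebra_simps)
qed

locale trace_bounded_risk =
  fixes T V :: "real^'n^'n" and c :: real
  assumes T_psd: "pos_semidef T" and V_pd: "pos_def V" and c_pos: "c > 0"
begin

definition bias :: "real^'n^'n \<Rightarrow> real^'n^'n" where
  "bias A = transpose (mat 1 - A) ** T ** (mat 1 - A)"

definition risk :: "real^'n^'n \<Rightarrow> real^'n^'n \<Rightarrow> real" where
  "risk F A = bias A \<bullet> F + T \<bullet> (A ** V ** transpose A)"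

definition worst_risk :: "real^'n^'n \<Rightarrow> real" where
  "worst_risk A = c * spec_norm (bias A) + T \<bullet> (A ** V ** transpose A)"

definition gain :: "real^'n^'n \<Rightarrow> real^'n^'n" where
  "gain F = F ** matrix_inv (F + V)"

definition min_risk :: "real^'n^'n \<Rightarrow> real" where
  "min_risk F = T \<bullet> (F - gain F ** F)"

definition feasible :: "(real^'n^'n) set" where
  "feasible = {F. pos_semidef F \<and> trace F \<le> c}"

lemma matrix_inv_add_V:
  assumes "pos_semidef F"
  shows "(F + V) ** matrix_inv (F + V) = mat 1" "matrix_inv (F + V) ** (F + V) = mat 1"
    "transpose (matrix_inv (F + V)) = matrix_inv (F + V)"
proof -
  have pd: "pos_def (F + V)" using assms V_pd by (rule pos_def_add_pos_semidef)
  note inv = pos_def_invertible[OF pd]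
  show "(F + V) ** matrix_inv (F + V) = mat 1" "matrix_inv (F + V) ** (F + V) = mat 1"
    using invertible_matrix_inv[OF inv] by auto
  show "transpose (matrix_inv (F + V)) = matrix_inv (F + V)"
    using sym_mat_matrix_inv[OF _ inv] pd by (simp add: pos_def_def sym_mat_def)
qed

lemma pos_semidef_bias: "pos_semidef (bias A)"
  unfolding bias_def by (rule pos_semidef_congruence[OF T_psd])

lemma inner_T_congruence_nonneg:
  fixes A F :: "real^'n^'n"
  assumes "pos_semidef F" shows "0 \<le> T \<bullet> (A ** F ** transpose A)"
  using pos_semidef_inner_nonneg[OF T_psd pos_semidef_congruence'[OF assms]] .

lemma bias_inner: "bias A \<bullet> F = T \<bullet> ((mat 1 - A) ** F ** transpose (mat 1 - A))"
proof -
  let ?B = "mat 1 - A"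
  have "T \<bullet> ((?B ** F) ** transpose ?B) = (T ** ?B) \<bullet> (?B ** F)" by (simp add: inner_matrix_mult_right)
  also have "\<dots> = (transpose ?B ** (T ** ?B)) \<bullet> F" by (simp add: inner_matrix_mult_left)
  finally show ?thesis unfolding bias_def by (simp add: matrix_mul_assoc)
qed

lemma risk_eq_min_risk_add_square:
  assumes F: "pos_semidef F"
  shows "risk F A = min_risk F + T \<bullet> ((A - gain F) ** (F + V) ** transpose (A - gain F))"
proof -
  note G = matrix_inv_add_V[OF F]
  have "risk F A = T \<bullet> ((mat 1 - A) ** F ** transpose (mat 1 - A) + A ** ((F + V) - F) ** transpose A)"
    unfolding risk_def bias_inner by (simp add: inner_add_right)
  also have "\<dots> = T \<bullet> ((A - gain F) ** (F + V) ** transpose (A - gain F) + (F - gain F ** F))"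
    unfolding gain_def using complete_square_identity[OF G(1,2) pos_semidef_sym[OF F] G(3)] by simp
  finally show ?thesis unfolding min_risk_def by (simp add: inner_add_right)
qed

lemma min_risk_le_risk: "pos_semidef F \<Longrightarrow> min_risk F \<le> risk F A"
  using risk_eq_min_risk_add_square[of F A]
    inner_T_congruence_nonneg[OF pos_def_imp_pos_semidef[OF pos_def_add_pos_semidef[OF _ V_pd]]]
  by simp

lemma risk_gain: "pos_semidef F \<Longrightarrow> risk F (gain F) = min_risk F"
  using risk_eq_min_risk_add_square[of F "gain F"] by simp

lemma risk_le_worst_risk: "F \<in> feasible \<Longrightarrow> risk F A \<le> worst_risk A"
proof -
  assume "F \<in> feasible"
  hence F: "pos_semidef F" "trace F \<le> c" by (auto simp: feasible_def)
  have "bias A \<bullet> F \<le> spec_norm (bias A) * trace F"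
    by (rule inner_le_spec_norm_mult_trace[OF pos_semidef_bias F(1)])
  also have "\<dots> \<le> spec_norm (bias A) * c"
    using F(2) spec_norm_pos_semidef(1)[OF pos_semidef_bias] by (intro mult_left_mono)
  finally show ?thesis unfolding risk_def worst_risk_def by (simp add: mult.commute)
qed

lemma worst_risk_attained: "\<exists>F\<in>feasible. risk F A = worst_risk A"
proof -
  obtain x where x: "norm x = 1" "x \<bullet> (bias A *v x) = spec_norm (bias A)"
    using spec_norm_pos_semidef(2)[OF pos_semidef_bias] by blast
  have "c *\<^sub>R outer x \<in> feasible" unfolding feasible_def using c_pos x(1)
    by (auto intro!: pos_semidef_scaleR pos_semidef_outer simp: trace_outer trace_scaleR dot_square_norm)
  moreover have "risk (c *\<^sub>R outer x) A = worst_risk A"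
    unfolding risk_def worst_risk_def using x(2) by (simp add: inner_outer)
  ultimately show ?thesis by blast
qed

lemma min_risk_eq_matrix_inv:
  assumes F: "pos_def F"
  shows "min_risk F = T \<bullet> matrix_inv (matrix_inv F + matrix_inv V)"
proof -
  let ?Gi = "matrix_inv (F + V)" and ?Fi = "matrix_inv F" and ?W = "matrix_inv V"
  note G = matrix_inv_add_V[OF pos_def_imp_pos_semidef[OF F]]
  have f1: "?Fi ** F = mat 1" using invertible_matrix_inv(2)[OF pos_def_invertible[OF F]] .
  have f2: "?W ** V = mat 1" using invertible_matrix_inv(2)[OF pos_def_invertible[OF V_pd]] .
  have f3: "X ** ?Gi ** F = X - X ** ?Gi ** V" for X :: "real^'n^'n"
  proof -
    have "X ** ?Gi ** F + X ** ?Gi ** V = X ** (?Gi ** (F + V))" by (simp add: matrix_ring_simps)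
    thus ?thesis using G(2) by (simp add: algebra_simps)
  qed
  have f4: "?W ** F ** ?Gi ** V = mat 1 - ?Gi ** V"
  proof -
    have "?W ** F ** ?Gi ** V = ?W ** ((F + V) - V) ** ?Gi ** V" by simp
    also have "\<dots> = ?W ** (F + V) ** ?Gi ** V - ?W ** V ** ?Gi ** V"
      by (simp only: matrix_diff_ldistrib matrix_diff_rdistrib)
    also have "\<dots> = mat 1 - ?Gi ** V" using G(1) f2 by (simp flip: matrix_mul_assoc)
    finally show ?thesis .
  qed
  have "(?Fi + ?W) ** (F - F ** ?Gi ** F)
      = ?Fi ** F - ?Fi ** F ** ?Gi ** F + (?W ** F - ?W ** F ** ?Gi ** F)"
    by (simp add: matrix_ring_simps)
  also have "\<dots> = mat 1 - (mat 1 - ?Gi ** V) + (?W ** F - (?W ** F - ?W ** F ** ?Gi ** V))"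
    using f1 f3[of "mat 1"] f3[of "?W ** F"] by simp
  also have "\<dots> = mat 1" using f4 by simp
  finally have "matrix_inv (?Fi + ?W) = F - F ** ?Gi ** F" by (rule matrix_inv_unique)
  thus ?thesis unfolding min_risk_def gain_def by simp
qed

lemma risk_nonneg: "pos_semidef F \<Longrightarrow> 0 \<le> risk F A"
  using pos_semidef_inner_nonneg[OF pos_semidef_bias]
    inner_T_congruence_nonneg[OF pos_def_imp_pos_semidef[OF V_pd]]
  unfolding risk_def by simp

lemma min_risk_nonneg: "pos_semidef F \<Longrightarrow> 0 \<le> min_risk F"
  using risk_gain risk_nonneg by metis

lemma risk_convex_combination:
  "risk ((1 - t) *\<^sub>R F1 + t *\<^sub>R F2) A = (1 - t) * risk F1 A + t * risk F2 A"
  unfolding risk_def by (simp add: algebra_simps)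

lemma min_risk_concave:
  assumes "pos_semidef F1" "pos_semidef F2" "0 \<le> t" "t \<le> 1"
  shows "(1 - t) * min_risk F1 + t * min_risk F2 \<le> min_risk ((1 - t) *\<^sub>R F1 + t *\<^sub>R F2)"
proof -
  let ?F = "(1 - t) *\<^sub>R F1 + t *\<^sub>R F2"
  have "(1 - t) * min_risk F1 + t * min_risk F2 \<le> (1 - t) * risk F1 (gain ?F) + t * risk F2 (gain ?F)"
    using assms by (intro add_mono mult_left_mono min_risk_le_risk) auto
  also have "\<dots> = min_risk ?F"
    using risk_gain[OF pos_semidef_convex_combination[OF assms]] by (simp add: risk_convex_combination)
  finally show ?thesis .
qed

lemma convex_feasible: "convex feasible"
proof (rule convexI)
  fix F1 F2 and u v :: real
  assume F: "F1 \<in> feasible" "F2 \<in> feasible" and uv: "0 \<le> u" "0 \<le> v" "u + v = 1"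
  hence "pos_semidef (u *\<^sub>R F1 + v *\<^sub>R F2)"
    by (intro pos_semidef_add pos_semidef_scaleR) (auto simp: feasible_def)
  moreover have "trace (u *\<^sub>R F1 + v *\<^sub>R F2) \<le> u * c + v * c"
    using F uv by (auto simp: trace_add trace_scaleR feasible_def intro!: add_mono mult_left_mono)
  moreover have "u * c + v * c = c" using uv(3) by (metis distrib_right mult_1)
  ultimately show "u *\<^sub>R F1 + v *\<^sub>R F2 \<in> feasible" by (simp add: feasible_def)
qed

lemma compact_feasible: "compact feasible"
proof -
  have "norm F \<le> real CARD('n) * (real CARD('n) * c)" if "F \<in> feasible" for F
  proof -
    have F: "pos_semidef F" "trace F \<le> c" using that by (auto simp: feasible_def)
    have "norm F \<le> (\<Sum>i\<in>UNIV. norm (F$i))" unfolding norm_vec_def by (rule L2_set_le_sum) simp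
    also have "\<dots> \<le> real CARD('n) * (real CARD('n) * c)"
    proof (rule sum_bounded_above[where K = "real CARD('n) * c", simplified])
      fix i :: 'n
      have "norm (F$i) \<le> (\<Sum>j\<in>UNIV. \<bar>F$i$j\<bar>)" by (rule norm_le_l1_cart)
      also have "\<dots> \<le> real CARD('n) * c"
        using pos_semidef_entry_bound[OF F] sum_bounded_above[of UNIV "\<lambda>j. \<bar>F$i$j\<bar>" c] by simp
      finally show "norm (F$i) \<le> real CARD('n) * c" .
    qed
    finally show ?thesis .
  qed
  hence "bounded feasible" unfolding bounded_iff by blast
  moreover have "feasible = (\<Inter>i. \<Inter>j. {F. F$i$j = F$j$i}) \<inter> (\<Inter>x. {F. 0 \<le> F \<bullet> outer x}) \<inter> {F. mat 1 \<bullet> F \<le> c}"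
    by (auto simp: feasible_def pos_semidef_def sym_mat_def transpose_def vec_eq_iff inner_outer inner_mat_1)
  hence "closed feasible"
    by (simp only:) (intro closed_Int closed_INT ballI closed_Collect_eq closed_Collect_le continuous_intros)
  ultimately show ?thesis by (simp add: compact_eq_bounded_closed)
qed

lemma min_risk_attains_max: "\<exists>Fs\<in>feasible. \<forall>F\<in>feasible. min_risk F \<le> min_risk Fs"
proof (rule inf_of_continuous_attains_sup[where \<phi> = risk])
  show "compact feasible" by (rule compact_feasible)
  show "feasible \<noteq> {}" using worst_risk_attained by blast
  show "continuous_on feasible (\<lambda>F. risk F A)" for A
    unfolding risk_def by (intro continuous_intros)
  show "min_risk F \<le> risk F A" if "F \<in> feasible" for F A
    using that by (intro min_risk_le_risk) (simp add: feasible_def)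
  show "\<exists>A. risk F A = min_risk F" if "F \<in> feasible" for F
    using that risk_gain by (auto simp: feasible_def)
qed

lemma min_risk_le_Sup_pos_def:
  assumes F: "F \<in> feasible"
  shows "min_risk F \<le> (SUP G\<in>{G. pos_def G \<and> trace G \<le> c}. min_risk G)"
proof (rule field_le_mult_one_interval)
  fix z :: real assume z: "0 < z" "z < 1"
  obtain E :: "real^'n^'n" where E: "pos_def E" "trace E = c" using pos_def_with_trace[OF c_pos] by blast
  have Fp: "pos_semidef F" using F by (simp add: feasible_def)
  let ?G = "(1 - z) *\<^sub>R E + z *\<^sub>R F"
  have "?G \<in> feasible"
    using convexD[OF convex_feasible, of E F "1 - z" z] F E z by (simp add: feasible_def pos_def_imp_pos_semidef)
  moreover have "pos_def ?G"
    using z E Fp by (subst add.commute) (intro pos_def_add_pos_semidef pos_semidef_scaleR pos_def_scaleR, auto)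
  ultimately have G: "?G \<in> {G. pos_def G \<and> trace G \<le> c}" by (simp add: feasible_def)
  have bdd: "bdd_above (min_risk ` {G. pos_def G \<and> trace G \<le> c})"
  proof (rule bdd_aboveI)
    fix x assume "x \<in> min_risk ` {G. pos_def G \<and> trace G \<le> c}"
    then obtain G where "x = min_risk G" "pos_def G" "trace G \<le> c" by blast
    thus "x \<le> worst_risk 0"
      using min_risk_le_risk[of G 0] risk_le_worst_risk[of G 0] pos_def_imp_pos_semidef
      by (force simp: feasible_def)
  qed
  have "z * min_risk F \<le> (1 - z) * min_risk E + z * min_risk F"
    using min_risk_nonneg[OF pos_def_imp_pos_semidef[OF E(1)]] z by simp
  also have "\<dots> \<le> min_risk ?G"
    using z by (intro min_risk_concave pos_def_imp_pos_semidef E(1) Fp) auto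
  also have "\<dots> \<le> (SUP G\<in>{G. pos_def G \<and> trace G \<le> c}. min_risk G)"
    using bdd G by (rule cSUP_upper2) simp
  finally show "z * min_risk F \<le> (SUP G\<in>{G. pos_def G \<and> trace G \<le> c}. min_risk G)" .
qed

definition weighted_inner :: "real^'n^'n \<Rightarrow> real^'n^'n \<Rightarrow> real" where
  "weighted_inner X Y = T \<bullet> (X ** transpose Y)"

lemma weighted_inner_commute: "weighted_inner X Y = weighted_inner Y X"
proof -
  have "weighted_inner X Y = transpose T \<bullet> transpose (X ** transpose Y)"
    unfolding weighted_inner_def by (simp add: inner_transpose)
  thus ?thesis unfolding weighted_inner_def using pos_semidef_sym[OF T_psd] by (simp add: matrix_transpose_mul)
qed

lemma weighted_inner_nonneg: "weighted_inner X X \<ge> 0"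
  using inner_T_congruence_nonneg[OF pos_def_imp_pos_semidef[OF pos_def_mat_1], of X]
  unfolding weighted_inner_def by simp

lemma weighted_inner_cauchy_schwarz:
  "weighted_inner X Y * weighted_inner X Y \<le> weighted_inner X X * weighted_inner Y Y"
proof (rule sq_le_mult_if_quadratic_nonneg[OF weighted_inner_nonneg weighted_inner_nonneg])
  fix t
  have "weighted_inner (X + t *\<^sub>R Y) (X + t *\<^sub>R Y)
      = weighted_inner X X + t * weighted_inner X Y + t * weighted_inner Y X + t * t * weighted_inner Y Y"
    unfolding weighted_inner_def by (simp add: matrix_ring_simps algebra_simps)
  thus "0 \<le> weighted_inner X X + 2 * t * weighted_inner X Y + t * t * weighted_inner Y Y"
    using weighted_inner_nonneg[of "X + t *\<^sub>R Y"] weighted_inner_commute[of Y X] by simp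
qed

lemma risk_diff:
  "risk F A - risk G A = T \<bullet> ((mat 1 - A) ** (F - G) ** transpose (mat 1 - A))"
  unfolding risk_def by (simp add: bias_inner inner_diff_right matrix_ring_simps)

lemma min_risk_along_segment:
  assumes Fs: "pos_semidef Fs" and Ft: "pos_semidef (Fs + t *\<^sub>R E)" and sE: "transpose E = E"
  defines "D \<equiv> gain (Fs + t *\<^sub>R E) - gain Fs" and "B \<equiv> mat 1 - gain Fs"
  shows "min_risk (Fs + t *\<^sub>R E) = min_risk Fs + T \<bullet> (D ** (Fs + t *\<^sub>R E) ** transpose D)
    + T \<bullet> (D ** V ** transpose D) + t * (T \<bullet> (B ** E ** transpose B)) - 2 * t * weighted_inner D (B ** E)"
proof -
  let ?Ft = "Fs + t *\<^sub>R E" and ?A = "gain (Fs + t *\<^sub>R E)"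
  have "min_risk ?Ft = risk Fs ?A + t * (bias ?A \<bullet> E)"
    using risk_gain[OF Ft] unfolding risk_def by (simp add: algebra_simps)
  also have "risk Fs ?A = min_risk Fs + T \<bullet> (D ** (Fs + V) ** transpose D)"
    unfolding D_def using risk_eq_min_risk_add_square[OF Fs] by simp
  also have "bias ?A \<bullet> E = T \<bullet> ((B - D) ** E ** transpose (B - D))"
    unfolding bias_inner B_def D_def by simp
  also have "\<dots> = T \<bullet> (B ** E ** transpose B) - weighted_inner (B ** E) D - weighted_inner D (B ** E)
      + T \<bullet> (D ** E ** transpose D)"
    unfolding weighted_inner_def by (simp add: matrix_ring_simps sE inner_diff_right)
  finally show ?thesis
    using weighted_inner_commute[of "B ** E" D]
    by (simp add: matrix_ring_simps algebra_simps)
qed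

text \<open>In the expansion of \<open>min_risk\<close> along the segment, the cross term
  \<open>2 t weighted_inner D Y\<close> is absorbed by Cauchy-Schwarz and AM-GM into
  \<open>\<langle>T, D V D\<^sup>T\<rangle> \<ge> k weighted_inner D D\<close>, leaving a loss of order \<open>t\<^sup>2\<close>.\<close>

lemma min_risk_along_segment_lower_bound:
  assumes Fs: "pos_semidef Fs" and F: "pos_semidef F" and t: "0 \<le> t" "t \<le> 1"
    and k: "k > 0" "\<forall>y. k * (y \<bullet> y) \<le> y \<bullet> (V *v y)"
  defines "Y \<equiv> (mat 1 - gain Fs) ** (F - Fs)"
  shows "min_risk Fs + t * (risk F (gain Fs) - risk Fs (gain Fs)) - t * t * weighted_inner Y Y / k
    \<le> min_risk (Fs + t *\<^sub>R (F - Fs))"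
proof -
  let ?E = "F - Fs" and ?Ft = "Fs + t *\<^sub>R (F - Fs)" and ?B = "mat 1 - gain Fs"
  define D where "D = gain ?Ft - gain Fs"
  have "?Ft = (1 - t) *\<^sub>R Fs + t *\<^sub>R F" by (simp add: algebra_simps)
  hence Ft: "pos_semidef ?Ft" using pos_semidef_convex_combination[OF Fs F t] by simp
  have sE: "transpose ?E = ?E" using pos_semidef_sym[OF Fs] pos_semidef_sym[OF F] by (simp add: transpose_diff)
  have "pos_semidef (V - k *\<^sub>R mat 1)"
    using V_pd k(2) by (auto simp: pos_semidef_def pos_def_def matrix_vector_mult_diff_rdistrib
        inner_diff_right scaleR_matrix_vector_mult)
  hence "T \<bullet> (D ** V ** transpose D) \<ge> k * weighted_inner D D"
    using inner_T_congruence_nonneg[of "V - k *\<^sub>R mat 1" D]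
    unfolding weighted_inner_def by (simp add: matrix_ring_simps inner_diff_right)
  moreover have "2 * (t * weighted_inner D Y) \<le> k * weighted_inner D D + t * t * weighted_inner Y Y / k"
  proof (rule double_le_add_if_sq_le_mult)
    show "0 \<le> k * weighted_inner D D" "0 \<le> t * t * weighted_inner Y Y / k"
      using k weighted_inner_nonneg by simp_all
    have "(t * weighted_inner D Y) * (t * weighted_inner D Y) = t * t * (weighted_inner D Y * weighted_inner D Y)"
      by (simp add: algebra_simps)
    also have "\<dots> \<le> t * t * (weighted_inner D D * weighted_inner Y Y)"
      using weighted_inner_cauchy_schwarz[of D Y] by (intro mult_left_mono) auto
    also have "\<dots> = (k * weighted_inner D D) * (t * t * weighted_inner Y Y / k)" using k by simp
    finally show "(t * weighted_inner D Y) * (t * weighted_inner D Y)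
      \<le> (k * weighted_inner D D) * (t * t * weighted_inner Y Y / k)" .
  qed
  moreover have "0 \<le> T \<bullet> (D ** ?Ft ** transpose D)" by (rule inner_T_congruence_nonneg[OF Ft])
  moreover have "risk F (gain Fs) - risk Fs (gain Fs) = T \<bullet> (?B ** ?E ** transpose ?B)"
    by (rule risk_diff)
  ultimately show ?thesis
    using min_risk_along_segment[OF Fs Ft sE] unfolding D_def Y_def by (simp add: algebra_simps)
qed

lemma gain_of_maximiser_is_saddle:
  assumes Fs: "Fs \<in> feasible" and max: "\<forall>F\<in>feasible. min_risk F \<le> min_risk Fs" and F: "F \<in> feasible"
  shows "risk F (gain Fs) \<le> risk Fs (gain Fs)"
proof -
  obtain k where k: "k > 0" "\<forall>y. k * (y \<bullet> y) \<le> y \<bullet> (V *v y)" using pos_def_bounded_below[OF V_pd] by blast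
  define Y where "Y = (mat 1 - gain Fs) ** (F - Fs)"
  have "risk F (gain Fs) - risk Fs (gain Fs) \<le> 0"
  proof (rule nonpos_if_le_quadratic)
    show "0 \<le> weighted_inner Y Y / k" using weighted_inner_nonneg k by simp
    fix t :: real assume t: "0 < t" "t \<le> 1"
    have "Fs + t *\<^sub>R (F - Fs) = (1 - t) *\<^sub>R Fs + t *\<^sub>R F" by (simp add: algebra_simps)
    hence "Fs + t *\<^sub>R (F - Fs) \<in> feasible" using convexD[OF convex_feasible Fs F, of "1 - t" t] t by simp
    hence "min_risk (Fs + t *\<^sub>R (F - Fs)) \<le> min_risk Fs" using max by blast
    thus "t * (risk F (gain Fs) - risk Fs (gain Fs)) \<le> t * t * (weighted_inner Y Y / k)"
      using min_risk_along_segment_lower_bound[of Fs F t k] Fs F t k unfolding Y_def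
      by (simp add: feasible_def)
  qed
  thus ?thesis by simp
qed

theorem Sup_min_risk_eq_Inf_worst_risk:
  "(SUP F\<in>{F. pos_def F \<and> trace F \<le> c}. min_risk F) = (INF A. worst_risk A)"
proof (rule antisym)
  have weak: "min_risk F \<le> worst_risk A" if "pos_def F" "trace F \<le> c" for F A
    using min_risk_le_risk[of F A] risk_le_worst_risk[of F A] pos_def_imp_pos_semidef[OF that(1)] that(2)
    by (simp add: feasible_def)
  have ne: "{F. pos_def F \<and> trace F \<le> c} \<noteq> {}"
    using pos_def_with_trace[OF c_pos] by auto
  show sup_le: "(SUP F\<in>{F. pos_def F \<and> trace F \<le> c}. min_risk F) \<le> (INF A. worst_risk A)"
    using weak ne by (intro cINF_greatest cSUP_least) auto
  obtain Fs where Fs: "Fs \<in> feasible" "\<forall>F\<in>feasible. min_risk F \<le> min_risk Fs"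
    using min_risk_attains_max by blast
  obtain F1 where F1: "F1 \<in> feasible" "risk F1 (gain Fs) = worst_risk (gain Fs)"
    using worst_risk_attained by blast
  have "(INF A. worst_risk A) \<le> worst_risk (gain Fs)"
    using weak ne by (intro cINF_lower bdd_belowI2[where m = "min_risk (SOME F. pos_def F \<and> trace F \<le> c)"])
      (auto intro: someI2_ex)
  also have "\<dots> \<le> risk Fs (gain Fs)"
    using F1 gain_of_maximiser_is_saddle[OF Fs F1(1)] by simp
  also have "\<dots> = min_risk Fs" using Fs(1) by (intro risk_gain) (simp add: feasible_def)
  also have "\<dots> \<le> (SUP F\<in>{F. pos_def F \<and> trace F \<le> c}. min_risk F)"
    by (rule min_risk_le_Sup_pos_def[OF Fs(1)])
  finally show "(INF A. worst_risk A) \<le> (SUP F\<in>{F. pos_def F \<and> trace F \<le> c}. min_risk F)" .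
qed

end

theorem theorem3:
  fixes S M T :: "real^'d^'d" and \<sigma> :: real and n :: nat
  assumes "pos_def S" and "pos_def M" and "pos_semidef T"
    and "\<sigma> > 0" and "n \<ge> 1"
  defines "S' \<equiv> inv_sqrt M ** S ** inv_sqrt M"
    and "T' \<equiv> inv_sqrt M ** T ** inv_sqrt M"
  shows "Sup {frob_inner T' (matrix_inv (matrix_inv F + (real n / \<sigma>\<^sup>2) *\<^sub>R S')) | F.
               pos_def F \<and> trace F \<le> 1 / pi\<^sup>2}
       = Inf {(1 / pi\<^sup>2) * spec_norm (transpose (mat 1 - A) ** T' ** (mat 1 - A))
               + (\<sigma>\<^sup>2 / real n) * frob_inner T' (A ** matrix_inv S' ** transpose A) | A.
               True}"
proof -
  have R: "pos_def (inv_sqrt M)" "transpose (inv_sqrt M) = inv_sqrt M"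
    using pos_def_inv_sqrt[OF assms(2)] pos_def_sym by auto
  have S': "pos_def S'"
    unfolding S'_def using pos_def_congruence[OF assms(1), of "inv_sqrt M"] R
    by (force simp: pos_def_def)
  have T': "pos_semidef T'" unfolding T'_def using pos_semidef_congruence[OF assms(3)] R by metis
  have \<sigma>n: "\<sigma>\<^sup>2 / real n > 0" using assms(4,5) by simp
  define V where "V = (\<sigma>\<^sup>2 / real n) *\<^sub>R matrix_inv S'"
  have "pos_def V" unfolding V_def using \<sigma>n S' by (intro pos_def_scaleR pos_def_matrix_inv)
  with T' interpret trace_bounded_risk T' V "1 / pi\<^sup>2" by unfold_locales simp_all
  have "matrix_inv V = inverse (\<sigma>\<^sup>2 / real n) *\<^sub>R matrix_inv (matrix_inv S')"
    unfolding V_def using assms(4,5) S' by (intro matrix_inv_scaleR pos_def_invertible pos_def_matrix_inv) simp_all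
  also have "\<dots> = (real n / \<sigma>\<^sup>2) *\<^sub>R S'"
    using S' by (simp add: matrix_inv_matrix_inv pos_def_invertible)
  finally have inv_V: "matrix_inv V = (real n / \<sigma>\<^sup>2) *\<^sub>R S'" .
  have "{frob_inner T' (matrix_inv (matrix_inv F + (real n / \<sigma>\<^sup>2) *\<^sub>R S')) | F.
      pos_def F \<and> trace F \<le> 1 / pi\<^sup>2} = min_risk ` {F. pos_def F \<and> trace F \<le> 1 / pi\<^sup>2}"
    by (auto simp: frob_inner_eq_inner min_risk_eq_matrix_inv inv_V)
  moreover have "worst_risk A = (1 / pi\<^sup>2) * spec_norm (transpose (mat 1 - A) ** T' ** (mat 1 - A))
      + (\<sigma>\<^sup>2 / real n) * frob_inner T' (A ** matrix_inv S' ** transpose A)" for A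
    unfolding worst_risk_def bias_def
    by (simp add: V_def frob_inner_eq_inner matrix_scalar_ac flip: scalar_matrix_assoc)
  ultimately show ?thesis using Sup_min_risk_eq_Inf_worst_risk by (simp add: full_SetCompr_eq)
qed

end
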